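(* Let $K$ be as in the context with $T_K$ universally $L^p$-improving. Let $G$ be a connected tree on vertices $1,\dots,n$ ($n\ge2$), labelled so that, when $G$ is rooted at vertex $1$, every vertex has a smaller label than each of its children. For nonnegative measurable $f_2,\dots,f_n$ define $$U(x^1)=\int_{(\mathbb R^d)^{n-1}}\prod_{\{i,j\}\in E,\ i<j}K(x^i,x^j)\prod_{i=2}^n f_i(x^i)\,dx^2\cdots dx^n,$$ so that $\Lambda^K_G(f_1,\dots,f_n)=\int U(x^1)f_1(x^1)\,dx^1$. Then for every $q\ge1$ there exist $p_1,\dots,p_n\in(1,\infty)$ with $\sum_{i=1}^n\frac1{p_i}>\frac1q$ and a constant $C$ such that $$\|U\cdot f_1\|_{L^q(\mathbb R^d)}\le C\prod_{i=1}^n\|f_i\|_{L^{p_i}(\mathbb R^d)}$$ for all nonnegative measurable $f_1,\dots,f_n$.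
   Context: $K:\mathbb R^d\times\mathbb R^d\to[0,\infty)$ is a nonnegative locally integrable function, $T_Kf(x)=\int_{\mathbb R^d}K(x,y)f(y)\,dy$, and $E$ is the edge set of $G$. $T_K$ is called universally $L^p$-improving if for every $q\in(1,\infty)$ there exist $p\in(1,q)$ and $C$ with $\|T_Kf\|_{L^q(\mathbb R^d)}\le C\|f\|_{L^p(\mathbb R^d)}$ for all $f$. *)

theory Defs
  imports "HOL-Analysis.Analysis"
begin

text \<open>Real powers of extended nonnegative reals (used with positive exponents only):
  \<open>\<infinity> ^ a = \<infinity>\<close>, otherwise the usual real power.\<close>
definition ennpow :: "ennreal \<Rightarrow> real \<Rightarrow> ennreal" where
  "ennpow x a = (if x = top then top else ennreal (enn2real x powr a))"

definition Lp_norm :: "real \<Rightarrow> ('a::euclidean_space \<Rightarrow> ennreal) \<Rightarrow> ennreal" where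
  "Lp_norm p g = ennpow (\<integral>\<^sup>+ x. ennpow (g x) p \<partial>lborel) (1 / p)"

definition T_op :: "('a::euclidean_space \<Rightarrow> 'a \<Rightarrow> real) \<Rightarrow> ('a \<Rightarrow> real) \<Rightarrow> 'a \<Rightarrow> ennreal" where
  "T_op K f x = (\<integral>\<^sup>+ y. ennreal (K x y * f y) \<partial>lborel)"

definition univ_Lp_improving :: "('a::euclidean_space \<Rightarrow> 'a \<Rightarrow> real) \<Rightarrow> bool" where
  "univ_Lp_improving K \<longleftrightarrow>
     (\<forall>q::real. q > 1 \<longrightarrow> (\<exists>p C::real. 1 < p \<and> p < q \<and>
        (\<forall>f. f \<in> borel_measurable lborel \<longrightarrow> (\<forall>x. 0 \<le> f x) \<longrightarrow>
           Lp_norm q (T_op K f) \<le> ennreal C * Lp_norm p (\<lambda>x. ennreal (f x)))))"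

definition locally_integrable_kernel :: "('a::euclidean_space \<Rightarrow> 'a \<Rightarrow> real) \<Rightarrow> bool" where
  "locally_integrable_kernel K \<longleftrightarrow>
     (\<forall>S :: ('a \<times> 'a) set. compact S \<longrightarrow> set_integrable lborel S (\<lambda>(x, y). K x y))"

definition simple_graph_on :: "nat \<Rightarrow> nat set set \<Rightarrow> bool" where
  "simple_graph_on n E \<longleftrightarrow> (\<forall>e\<in>E. e \<subseteq> {1..n} \<and> card e = 2)"

definition is_walk :: "nat set set \<Rightarrow> nat list \<Rightarrow> bool" where
  "is_walk E ps \<longleftrightarrow> ps \<noteq> [] \<and> (\<forall>i. Suc i < length ps \<longrightarrow> {ps ! i, ps ! Suc i} \<in> E)"

definition is_path :: "nat set set \<Rightarrow> nat list \<Rightarrow> bool" where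
  "is_path E ps \<longleftrightarrow> is_walk E ps \<and> distinct ps"

definition is_cycle :: "nat set set \<Rightarrow> nat list \<Rightarrow> bool" where
  "is_cycle E ps \<longleftrightarrow> is_path E ps \<and> length ps \<ge> 3 \<and> {last ps, hd ps} \<in> E"

definition connected_graph :: "nat \<Rightarrow> nat set set \<Rightarrow> bool" where
  "connected_graph n E \<longleftrightarrow>
     (\<forall>u\<in>{1..n}. \<forall>v\<in>{1..n}. \<exists>ps. is_path E ps \<and> hd ps = u \<and> last ps = v)"

definition is_tree :: "nat \<Rightarrow> nat set set \<Rightarrow> bool" where
  "is_tree n E \<longleftrightarrow> simple_graph_on n E \<and> connected_graph n E \<and> (\<nexists>ps. is_cycle E ps)"

definition rooted_child :: "nat set set \<Rightarrow> nat \<Rightarrow> nat \<Rightarrow> bool" where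
  "rooted_child E v w \<longleftrightarrow> (\<exists>ps. is_path E (ps @ [v, w]) \<and> hd (ps @ [v, w]) = 1)"

definition U_fun :: "nat \<Rightarrow> nat set set \<Rightarrow> ('a::euclidean_space \<Rightarrow> 'a \<Rightarrow> real)
     \<Rightarrow> (nat \<Rightarrow> 'a \<Rightarrow> real) \<Rightarrow> 'a \<Rightarrow> ennreal" where
  "U_fun n E K f x1 =
     (\<integral>\<^sup>+ y. (let z = y(1 := x1) in
          (\<Prod>(i, j)\<in>{(i, j). i < j \<and> {i, j} \<in> E}. ennreal (K (z i) (z j)))
          * (\<Prod>i\<in>{2..n}. ennreal (f i (z i))))
        \<partial>(PiM {2..n} (\<lambda>_. lborel)))"

end

theory Submission
  imports Defs
begin

text \<open>Induction on the number of vertices. The largest vertex \<open>k\<close> is a leaf: a second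
  neighbour of \<open>k\<close> would be a child of \<open>k\<close> with a smaller label. Integrating out \<open>x\<^sup>k\<close>
  replaces \<open>f\<^sub>m\<close>, for the parent \<open>m\<close> of \<open>k\<close>, by \<open>f\<^sub>m \<cdot> T\<^sub>K f\<^sub>k\<close>, leaving the same form on
  the graph with \<open>k\<close> removed. By Cauchy-Schwarz
  \<open>\<parallel>f\<^sub>m T\<^sub>K f\<^sub>k\<parallel>\<^sub>r \<le> \<parallel>f\<^sub>m\<parallel>\<^sub>2\<^sub>r \<parallel>T\<^sub>K f\<^sub>k\<parallel>\<^sub>2\<^sub>r\<close>, and the \<open>L\<^sup>p\<close>-improving property bounds the last
  factor by \<open>\<parallel>f\<^sub>k\<parallel>\<^sub>t\<close> with \<open>t < 2r\<close>. As \<open>1/(2r) + 1/t > 1/r\<close>, the sum of the reciprocal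
  exponents strictly increases at every step, starting from the exponent \<open>q\<close> on a single
  vertex.\<close>

section \<open>Powers and \<open>L\<^sup>p\<close> norms of extended reals\<close>

lemma ennpow_top [simp]: "ennpow top a = top"
  by (simp add: ennpow_def)

lemma ennpow_zero [simp]: "ennpow 0 a = 0"
  by (simp add: ennpow_def)

lemma ennpow_eq_top_iff [simp]: "ennpow x a = top \<longleftrightarrow> x = top"
  by (simp add: ennpow_def)

lemma ennpow_eq_0_iff: "ennpow x a = 0 \<longleftrightarrow> x = 0"
  by (cases x) (auto simp: ennpow_def ennreal_eq_0_iff)

lemma ennpow_mono:
  assumes "0 < a" "x \<le> y"
  shows "ennpow x a \<le> ennpow y a"
proof (cases "y = top")
  case False
  then have "x \<noteq> top"
    using assms(2) top.extremum_unique by fastforce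
  then show ?thesis
    using False assms by (auto simp: ennpow_def less_top intro!: ennreal_leI powr_mono2 enn2real_mono)
qed simp

lemma ennpow_mult:
  assumes "0 < a"
  shows "ennpow (x * y) a = ennpow x a * ennpow y a"
proof (cases "x = 0 \<or> y = 0")
  case nonzero: False
  show ?thesis
  proof (cases "x = top \<or> y = top")
    case True
    then show ?thesis
      using nonzero by (auto simp: ennreal_mult_eq_top_iff ennpow_eq_0_iff)
  next
    case False
    then obtain u v where "x = ennreal u" "y = ennreal v" "0 \<le> u" "0 \<le> v"
      by (metis enn2real_nonneg ennreal_enn2real_if)
    then show ?thesis
      by (simp add: ennpow_def ennreal_mult[symmetric] powr_mult)
  qed
qed auto

lemma ennpow_ennpow:
  assumes "0 < a" "0 < b"
  shows "ennpow (ennpow x a) b = ennpow x (a * b)"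
  using assms by (cases x) (auto simp: ennpow_def powr_powr)

lemma ennpow_power2: "ennpow x 2 = x\<^sup>2"
  by (cases x) (auto simp: ennpow_def ennreal_power)

lemma ennpow_power2_half [simp]: "ennpow (x\<^sup>2) (1 / 2) = x"
  by (cases x) (auto simp: ennpow_def ennreal_power powr_powr simp flip: powr_realpow)

lemma borel_measurable_ennpow_borel: "(\<lambda>x. ennpow x a) \<in> borel_measurable (borel :: ennreal measure)"
  unfolding ennpow_def by measurable

lemma borel_measurable_ennpow [measurable]:
  "f \<in> borel_measurable M \<Longrightarrow> (\<lambda>x. ennpow (f x) a) \<in> borel_measurable M"
  using measurable_compose[OF _ borel_measurable_ennpow_borel] by blast

lemma Lp_norm_mult_le:
  fixes g h :: "'a::euclidean_space \<Rightarrow> ennreal"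
  assumes [measurable]: "g \<in> borel_measurable lborel" "h \<in> borel_measurable lborel"
    and r: "0 < r"
  shows "Lp_norm r (\<lambda>x. g x * h x) \<le> Lp_norm (2 * r) g * Lp_norm (2 * r) h"
proof -
  define A where "A = (\<integral>\<^sup>+x. ennpow (g x) (2 * r) \<partial>lborel)"
  define B where "B = (\<integral>\<^sup>+x. ennpow (h x) (2 * r) \<partial>lborel)"
  have "(\<integral>\<^sup>+x. ennpow (g x) r * ennpow (h x) r \<partial>lborel)\<^sup>2
      \<le> (\<integral>\<^sup>+x. (ennpow (g x) r)\<^sup>2 \<partial>lborel) * (\<integral>\<^sup>+x. (ennpow (h x) r)\<^sup>2 \<partial>lborel)"
    by (rule Cauchy_Schwarz_nn_integral) measurable
  also have "\<dots> = A * B"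
    using r by (simp add: A_def B_def ennpow_power2[symmetric] ennpow_ennpow mult.commute)
  finally have "ennpow ((\<integral>\<^sup>+x. ennpow (g x) r * ennpow (h x) r \<partial>lborel)\<^sup>2) (1 / 2)
      \<le> ennpow (A * B) (1 / 2)"
    by (rule ennpow_mono[rotated]) simp
  then have "(\<integral>\<^sup>+x. ennpow (g x * h x) r \<partial>lborel) \<le> ennpow A (1 / 2) * ennpow B (1 / 2)"
    using r by (simp add: ennpow_mult)
  then have "Lp_norm r (\<lambda>x. g x * h x) \<le> ennpow (ennpow A (1 / 2) * ennpow B (1 / 2)) (1 / r)"
    unfolding Lp_norm_def using r by (intro ennpow_mono) auto
  also have "\<dots> = Lp_norm (2 * r) g * Lp_norm (2 * r) h"
    unfolding Lp_norm_def A_def B_def using r by (simp add: ennpow_mult ennpow_ennpow)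
  finally show ?thesis .
qed

lemma Lp_norm_cong_AE:
  assumes "AE x in lborel. g x = h x"
  shows "Lp_norm p g = Lp_norm p h"
  unfolding Lp_norm_def using assms by (intro arg_cong[where f="\<lambda>X. ennpow X (1 / p)"] nn_integral_cong_AE) auto

section \<open>The integral operator\<close>

lemma locally_integrable_kernel_measurable:
  fixes K :: "'a::euclidean_space \<Rightarrow> 'a \<Rightarrow> real"
  assumes "locally_integrable_kernel K"
  shows "(\<lambda>(x, y). K x y) \<in> borel_measurable (lborel \<Otimes>\<^sub>M lborel)"
proof -
  let ?K = "\<lambda>(x, y). K x y" and ?Kk = "\<lambda>k::nat. \<lambda>z. indicator (cball 0 (real k)) z *\<^sub>R (\<lambda>(x, y). K x y) z"
  have "?Kk k \<in> borel_measurable lborel" for k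
    using assms compact_cball unfolding locally_integrable_kernel_def set_integrable_def
    by (blast intro: borel_measurable_integrable)
  moreover have "(\<lambda>k. ?Kk k z) \<longlonglongrightarrow> ?K z" for z
  proof (rule tendsto_eventually)
    obtain N :: nat where "norm z \<le> real N"
      using real_arch_simple by blast
    then show "\<forall>\<^sub>F k in sequentially. ?Kk k z = ?K z"
      by (intro eventually_sequentiallyI[of N]) (auto simp: dist_norm)
  qed
  ultimately show ?thesis
    unfolding lborel_prod by (rule borel_measurable_LIMSEQ_metric)
qed

definition kernel_op :: "('a::euclidean_space \<Rightarrow> 'a \<Rightarrow> real) \<Rightarrow> ('a \<Rightarrow> ennreal) \<Rightarrow> 'a \<Rightarrow> ennreal" where
  "kernel_op K g x = (\<integral>\<^sup>+ y. ennreal (K x y) * g y \<partial>lborel)"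

lemma borel_measurable_kernel_op:
  fixes K :: "'a::euclidean_space \<Rightarrow> 'a \<Rightarrow> real"
  assumes "(\<lambda>(x, y). K x y) \<in> borel_measurable (lborel \<Otimes>\<^sub>M lborel)"
    and [measurable]: "g \<in> borel_measurable lborel"
  shows "kernel_op K g \<in> borel_measurable lborel"
proof -
  have [measurable]: "(\<lambda>z. K (fst z) (snd z)) \<in> borel_measurable (lborel \<Otimes>\<^sub>M lborel)"
    using assms(1) by (simp add: case_prod_beta')
  show ?thesis
    unfolding kernel_op_def by measurable
qed

lemma univ_Lp_improving_kernel_op:
  fixes K :: "'a::euclidean_space \<Rightarrow> 'a \<Rightarrow> real"
  assumes "univ_Lp_improving K" "1 < s" "\<forall>x y. 0 \<le> K x y"
  obtains t C where "1 < t" "t < s" "0 < C"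
    "\<And>g. g \<in> borel_measurable lborel \<Longrightarrow> Lp_norm s (kernel_op K g) \<le> ennreal C * Lp_norm t g"
proof -
  obtain t C0 where t: "1 < t" "t < s" and C0: "\<And>f. f \<in> borel_measurable lborel \<Longrightarrow> \<forall>x. 0 \<le> f x \<Longrightarrow>
      Lp_norm s (T_op K f) \<le> ennreal C0 * Lp_norm t (\<lambda>x. ennreal (f x))"
    using assms(1,2) unfolding univ_Lp_improving_def by blast
  define C where "C = max C0 1"
  have "Lp_norm s (kernel_op K g) \<le> ennreal C * Lp_norm t g"
    if g [measurable]: "g \<in> borel_measurable lborel" for g
  proof (cases "Lp_norm t g = top")
    case True
    then show ?thesis
      by (simp add: C_def ennreal_mult_top)
  next
    case False
    then have "(\<integral>\<^sup>+x. ennpow (g x) t \<partial>lborel) \<noteq> \<infinity>"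
      by (simp add: Lp_norm_def)
    then have "AE x in lborel. ennpow (g x) t \<noteq> \<infinity>"
      by (intro nn_integral_PInf_AE) measurable
    then have g_eq: "AE x in lborel. ennreal (enn2real (g x)) = g x"
      by eventually_elim (simp add: ennreal_enn2real_if)
    have "kernel_op K g = T_op K (\<lambda>y. enn2real (g y))"
      unfolding kernel_op_def T_op_def using g_eq
      by (intro ext nn_integral_cong_AE) (auto elim!: eventually_mono simp: assms(3) ennreal_mult)
    then have "Lp_norm s (kernel_op K g) \<le> ennreal C0 * Lp_norm t g"
      using C0[of "\<lambda>y. enn2real (g y)"] Lp_norm_cong_AE[OF g_eq] by simp
    also have "\<dots> \<le> ennreal C * Lp_norm t g"
      by (intro mult_right_mono ennreal_leI) (auto simp: C_def)
    finally show ?thesis .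
  qed
  moreover have "0 < C"
    by (simp add: C_def)
  ultimately show ?thesis
    using that t by blast
qed

section \<open>Graphs whose labels increase away from the root\<close>

definition root_increasing_graph :: "nat \<Rightarrow> nat set set \<Rightarrow> bool" where
  "root_increasing_graph k E \<longleftrightarrow>
     simple_graph_on k E \<and> connected_graph k E \<and> (\<forall>v w. rooted_child E v w \<longrightarrow> v < w)"

lemma is_walk_edge:
  assumes "is_walk E (xs @ a # b # ys)"
  shows "{a, b} \<in> E"
proof -
  have "Suc (length xs) < length (xs @ a # b # ys)"
    by simp
  then have "{(xs @ a # b # ys) ! length xs, (xs @ a # b # ys) ! Suc (length xs)} \<in> E"
    using assms unfolding is_walk_def by blast
  then show ?thesis
    by (simp add: nth_append)
qed

lemma is_walk_prefix:
  assumes "is_walk E (xs @ ys)" "xs \<noteq> []"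
  shows "is_walk E xs"
  unfolding is_walk_def
proof (intro conjI allI impI)
  fix i assume i: "Suc i < length xs"
  then have "{(xs @ ys) ! i, (xs @ ys) ! Suc i} \<in> E"
    using assms(1) unfolding is_walk_def by auto
  then show "{xs ! i, xs ! Suc i} \<in> E"
    using i by (simp add: nth_append)
qed fact

lemma is_walk_snoc:
  assumes "is_walk E xs" "{last xs, b} \<in> E"
  shows "is_walk E (xs @ [b])"
  unfolding is_walk_def
proof (intro conjI allI impI)
  fix i assume i: "Suc i < length (xs @ [b])"
  have "xs \<noteq> []"
    using assms(1) by (simp add: is_walk_def)
  show "{(xs @ [b]) ! i, (xs @ [b]) ! Suc i} \<in> E"
  proof (cases "Suc i < length xs")
    case True
    then show ?thesis
      using assms(1) unfolding is_walk_def by (simp add: nth_append)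
  next
    case False
    then have "Suc i = length xs"
      using i by simp
    then have "xs ! i = last xs"
      using \<open>xs \<noteq> []\<close> by (metis diff_Suc_1 last_conv_nth)
    then show ?thesis
      using assms(2) \<open>Suc i = length xs\<close> by (simp add: nth_append)
  qed
qed simp

lemma is_path_prefix:
  assumes "is_path E (xs @ ys)" "xs \<noteq> []"
  shows "is_path E xs"
  using assms is_walk_prefix unfolding is_path_def by auto

lemma is_path_snoc:
  assumes "is_path E xs" "{last xs, b} \<in> E" "b \<notin> set xs"
  shows "is_path E (xs @ [b])"
  using assms is_walk_snoc unfolding is_path_def by auto

lemma is_path_mono:
  assumes "is_path E ps" "E \<subseteq> F"
  shows "is_path F ps"
  using assms unfolding is_path_def is_walk_def by blast

lemma is_path_Diff_edge:
  assumes "is_path E ps" "k \<notin> set ps" "k \<in> e"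
  shows "is_path (E - {e}) ps"
  unfolding is_path_def is_walk_def
proof (intro conjI allI impI)
  fix i assume i: "Suc i < length ps"
  then have "{ps ! i, ps ! Suc i} \<in> E" "ps ! i \<noteq> k" "ps ! Suc i \<noteq> k"
    using assms(1,2) nth_mem[of i ps] nth_mem[of "Suc i" ps] unfolding is_path_def is_walk_def by auto
  then show "{ps ! i, ps ! Suc i} \<in> E - {e}"
    using assms(3) by auto
qed (use assms(1) in \<open>auto simp: is_path_def is_walk_def\<close>)

context
  fixes k :: nat and E :: "nat set set"
  assumes G: "root_increasing_graph k E" and k2: "2 \<le> k"
begin

lemma root_increasing_graph_pathE:
  assumes "u \<in> {1..k}" "v \<in> {1..k}"
  obtains ps where "is_path E ps" "hd ps = u" "last ps = v"
  using G assms unfolding root_increasing_graph_def connected_graph_def by blast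

lemma edge_vertices:
  assumes "{a, b} \<in> E"
  shows "a \<in> {1..k}" "b \<in> {1..k}" "a \<noteq> b"
proof -
  have "{a, b} \<subseteq> {1..k}" "card {a, b} = 2"
    using G assms unfolding root_increasing_graph_def simple_graph_on_def by blast+
  then show "a \<in> {1..k}" "b \<in> {1..k}" "a \<noteq> b"
    by (cases "a = b", auto)
qed

lemma root_path_through_max_vertex_ends_there:
  assumes p: "is_path E ps" and "hd ps = 1" and "k \<in> set ps"
  shows "last ps = k"
proof (rule ccontr)
  assume "last ps \<noteq> k"
  obtain xs ys' where "ps = xs @ k # ys'"
    using split_list[OF \<open>k \<in> set ps\<close>] by blast
  with \<open>last ps \<noteq> k\<close> obtain u ys where ps: "ps = xs @ k # u # ys"
    by (cases ys') auto
  have "is_path E (xs @ [k, u])"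
    using p ps is_path_prefix[of E "xs @ [k, u]" ys] by simp
  moreover have "hd (xs @ [k, u]) = 1"
    using \<open>hd ps = 1\<close> ps by (cases xs) auto
  ultimately have "k < u"
    using G unfolding root_increasing_graph_def rooted_child_def by blast
  moreover have "{k, u} \<in> E"
    using p ps is_walk_edge[of E xs k u ys] by (simp add: is_path_def)
  ultimately show False
    using edge_vertices(2)[of k u] by auto
qed

lemma root_path_to_neighbour_of_max_vertex:
  assumes "{w, k} \<in> E"
  obtains Q where "is_path E Q" "hd Q = 1" "last Q = w" "k \<notin> set Q"
proof -
  have w: "w \<in> {1..k}" "w \<noteq> k"
    using edge_vertices[OF assms] by auto
  have "1 \<in> {1..k}"
    using k2 by simp
  from this w(1) obtain Q where Q: "is_path E Q" "hd Q = 1" "last Q = w"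
    by (rule root_increasing_graph_pathE)
  then have "k \<notin> set Q"
    using root_path_through_max_vertex_ends_there w by auto
  then show ?thesis
    using Q that by blast
qed

text \<open>Otherwise \<open>Q @ [k, v]\<close> is a root path making \<open>v\<close> a child of \<open>k\<close>.\<close>
lemma neighbour_of_max_vertex_on_root_path:
  assumes Q: "is_path E Q" "hd Q = 1" "last Q = w" "k \<notin> set Q"
    and e: "{w, k} \<in> E" "{v, k} \<in> E"
  shows "v \<in> set Q"
proof (rule ccontr)
  assume v: "v \<notin> set Q"
  have vk: "v \<noteq> k" "v \<in> {1..k}"
    using edge_vertices[OF e(2)] by auto
  have "is_path E (Q @ [k])"
    using Q e by (intro is_path_snoc) auto
  then have "is_path E (Q @ [k, v])"
    using is_path_snoc[of E "Q @ [k]" v] e vk v by (auto simp: insert_commute)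
  moreover have "hd (Q @ [k, v]) = 1"
    using Q(1,2) by (simp add: is_path_def is_walk_def)
  ultimately have "rooted_child E k v"
    unfolding rooted_child_def by blast
  then have "k < v"
    using G by (simp add: root_increasing_graph_def)
  with vk show False
    by simp
qed

lemma max_vertex_unique_neighbour:
  assumes e: "{w, k} \<in> E" "{v, k} \<in> E"
  shows "v = w"
proof (rule ccontr)
  assume "v \<noteq> w"
  obtain Q where Q: "is_path E Q" "hd Q = 1" "last Q = w" "k \<notin> set Q"
    using root_path_to_neighbour_of_max_vertex[OF e(1)] by blast
  obtain A B where "Q = A @ v # B"
    using split_list[OF neighbour_of_max_vertex_on_root_path[OF Q e]] by blast
  then have Q_eq: "Q = (A @ [v]) @ B"
    by simp
  have "B \<noteq> []"
    using Q(3) Q_eq \<open>v \<noteq> w\<close> by auto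
  then have "w \<in> set B"
    using Q(3) Q_eq by (metis last_appendR last_in_set)
  moreover have "distinct Q"
    using Q(1) by (simp add: is_path_def)
  ultimately have "w \<notin> set (A @ [v])"
    using Q_eq by auto
  moreover have "is_path E (A @ [v])" "hd (A @ [v]) = 1"
    using Q(1,2) Q_eq is_path_prefix by (auto simp: hd_append)
  ultimately have "w \<in> set (A @ [v])"
    using Q(4) Q_eq e neighbour_of_max_vertex_on_root_path[of "A @ [v]" v w] by auto
  with \<open>w \<notin> set (A @ [v])\<close> show False ..
qed

lemma max_vertex_has_smaller_neighbour:
  obtains m where "1 \<le> m" "m < k" "{m, k} \<in> E"
proof -
  have "1 \<in> {1..k}" "k \<in> {1..k}"
    using k2 by simp_all
  then obtain ps where ps: "is_path E ps" "hd ps = 1" "last ps = k"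
    by (rule root_increasing_graph_pathE)
  have "ps \<noteq> []"
    using ps(1) by (simp add: is_path_def is_walk_def)
  then have ps_snoc: "ps = butlast ps @ [k]"
    using ps(3) by (metis append_butlast_last_id)
  have "butlast ps \<noteq> []"
  proof
    assume "butlast ps = []"
    then have "ps = [k]"
      using ps_snoc by simp
    then show False
      using ps(2) k2 by simp
  qed
  then have "butlast ps = butlast (butlast ps) @ [last (butlast ps)]"
    by simp
  then obtain xs m where ps_eq: "ps = xs @ [m, k]"
    using ps_snoc by (metis append.assoc append_Cons append_Nil)
  then have "rooted_child E m k"
    unfolding rooted_child_def using ps by blast
  then have "m < k"
    using G by (simp add: root_increasing_graph_def)
  moreover have "{m, k} \<in> E"
    using ps(1) ps_eq is_walk_edge[of E xs m k "[]"] by (simp add: is_path_def)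
  ultimately show ?thesis
    using that edge_vertices(1)[of m k] by auto
qed

lemma edge_at_max_vertex:
  assumes "{m, k} \<in> E" "e \<in> E" "k \<in> e"
  shows "e = {m, k}"
proof -
  obtain a b where "e = {a, b}"
    using G assms(2) unfolding root_increasing_graph_def simple_graph_on_def by (meson card_2_iff)
  then obtain w where "e = {w, k}"
    using assms(3) by (auto simp: insert_commute)
  then show ?thesis
    using max_vertex_unique_neighbour assms by blast
qed

lemma path_between_other_vertices_avoids_max_vertex:
  assumes "{m, k} \<in> E" "is_path E ps" "hd ps \<noteq> k" "last ps \<noteq> k"
  shows "k \<notin> set ps"
proof
  assume "k \<in> set ps"
  then obtain A B where "ps = A @ k # B"
    by (meson split_list)
  moreover from this obtain A' a where "A = A' @ [a]"
    using assms(3) by (metis append_butlast_last_id append_Nil list.sel(1))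
  moreover from calculation obtain b B' where "B = b # B'"
    using assms(4) by (cases B) auto
  ultimately have ps: "ps = A' @ a # k # b # B'"
    by simp
  have "{a, k} \<in> E" "{b, k} \<in> E"
    using assms(2) ps is_walk_edge[of E A' a k "b # B'"] is_walk_edge[of E "A' @ [a]" k b B']
    by (auto simp: is_path_def insert_commute)
  then have "a = m" "b = m"
    using max_vertex_unique_neighbour assms(1) by blast+
  then show False
    using assms(2) ps by (simp add: is_path_def)
qed

lemma root_increasing_graph_remove_max_vertex:
  assumes m: "{m, k} \<in> E"
  shows "root_increasing_graph (k - 1) (E - {{m, k}})"
  unfolding root_increasing_graph_def
proof (intro conjI allI impI)
  show "simple_graph_on (k - 1) (E - {{m, k}})"
    unfolding simple_graph_on_def
  proof
    fix e assume e: "e \<in> E - {{m, k}}"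
    then have "e \<subseteq> {1..k} - {k}" "card e = 2"
      using G edge_at_max_vertex[OF m, of e] unfolding root_increasing_graph_def simple_graph_on_def by auto
    moreover have "{1..k} - {k} = {1..k - 1}"
      by auto
    ultimately show "e \<subseteq> {1..k - 1} \<and> card e = 2"
      by simp
  qed
next
  fix v w assume "rooted_child (E - {{m, k}}) v w"
  then have "rooted_child E v w"
    unfolding rooted_child_def using is_path_mono[of "E - {{m, k}}" _ E] by blast
  then show "v < w"
    using G by (simp add: root_increasing_graph_def)
next
  show "connected_graph (k - 1) (E - {{m, k}})"
    unfolding connected_graph_def
  proof (intro ballI)
    fix u v assume uv: "u \<in> {1..k - 1}" "v \<in> {1..k - 1}"
    then have "u \<in> {1..k}" "v \<in> {1..k}"
      by auto
    then obtain ps where ps: "is_path E ps" "hd ps = u" "last ps = v"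
      by (rule root_increasing_graph_pathE)
    then have "k \<notin> set ps"
      using path_between_other_vertices_avoids_max_vertex[OF m] uv k2 by auto
    then show "\<exists>ps. is_path (E - {{m, k}}) ps \<and> hd ps = u \<and> last ps = v"
      using ps is_path_Diff_edge by blast
  qed
qed

end

section \<open>Integrating out a leaf\<close>

definition ordered_edges :: "nat set set \<Rightarrow> (nat \<times> nat) set" where
  "ordered_edges E = {(i, j). i < j \<and> {i, j} \<in> E}"

text \<open>Versions of \<open>U_fun\<close> for \<open>ennreal\<close>-valued functions: the reduction step replaces
  \<open>f\<^sub>m\<close> by \<open>f\<^sub>m \<cdot> T\<^sub>K f\<^sub>k\<close>, which may take the value \<open>\<infinity>\<close>.\<close>
definition U_integrand :: "nat \<Rightarrow> nat set set \<Rightarrow> ('a::euclidean_space \<Rightarrow> 'a \<Rightarrow> real)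
    \<Rightarrow> (nat \<Rightarrow> 'a \<Rightarrow> ennreal) \<Rightarrow> 'a \<Rightarrow> (nat \<Rightarrow> 'a) \<Rightarrow> ennreal" where
  "U_integrand k E K g x1 y =
     (\<Prod>(i, j)\<in>ordered_edges E. ennreal (K ((y(1 := x1)) i) ((y(1 := x1)) j)))
     * (\<Prod>i\<in>{2..k}. g i ((y(1 := x1)) i))"

definition U_enn :: "nat \<Rightarrow> nat set set \<Rightarrow> ('a::euclidean_space \<Rightarrow> 'a \<Rightarrow> real)
    \<Rightarrow> (nat \<Rightarrow> 'a \<Rightarrow> ennreal) \<Rightarrow> 'a \<Rightarrow> ennreal" where
  "U_enn k E K g x1 = (\<integral>\<^sup>+ y. U_integrand k E K g x1 y \<partial>(PiM {2..k} (\<lambda>_. lborel)))"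

definition U_weighted :: "nat \<Rightarrow> nat set set \<Rightarrow> ('a::euclidean_space \<Rightarrow> 'a \<Rightarrow> real)
    \<Rightarrow> (nat \<Rightarrow> 'a \<Rightarrow> ennreal) \<Rightarrow> 'a \<Rightarrow> ennreal" where
  "U_weighted k E K g x1 = U_enn k E K g x1 * g 1 x1"

lemma finite_ordered_edges: "simple_graph_on k E \<Longrightarrow> finite (ordered_edges E)"
  unfolding simple_graph_on_def ordered_edges_def
  by (rule finite_subset[of _ "{1..k} \<times> {1..k}"]) auto

lemma measurable_fun_upd_component:
  fixes i k :: nat
  assumes "i \<in> {1..k}"
  shows "(\<lambda>y. (y(1 := x1)) i) \<in> measurable (PiM {2..k} (\<lambda>_. lborel)) (lborel :: 'a::euclidean_space measure)"
proof (cases "i = 1")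
  case False
  then have "i \<in> {2..k}"
    using assms by auto
  then show ?thesis
    using False by (simp add: measurable_component_singleton)
qed simp

lemma borel_measurable_kernel_comp:
  fixes K :: "'a::euclidean_space \<Rightarrow> 'a \<Rightarrow> real"
  assumes "(\<lambda>(x, y). K x y) \<in> borel_measurable (lborel \<Otimes>\<^sub>M lborel)"
    and "a \<in> measurable M lborel" "b \<in> measurable M lborel"
  shows "(\<lambda>y. ennreal (K (a y) (b y))) \<in> borel_measurable M"
proof -
  have "(\<lambda>y. (a y, b y)) \<in> measurable M (lborel \<Otimes>\<^sub>M lborel)"
    using assms(2,3) by (rule measurable_Pair)
  from measurable_compose[OF this assms(1)] have "(\<lambda>y. K (a y) (b y)) \<in> borel_measurable M"
    by simp
  from measurable_compose[OF this measurable_ennreal] show ?thesis .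
qed

lemma borel_measurable_U_integrand:
  fixes K :: "'a::euclidean_space \<Rightarrow> 'a \<Rightarrow> real"
  assumes E: "simple_graph_on k E"
    and K: "(\<lambda>(x, y). K x y) \<in> borel_measurable (lborel \<Otimes>\<^sub>M lborel)"
    and g: "\<And>i. i \<in> {2..k} \<Longrightarrow> g i \<in> borel_measurable lborel"
  shows "U_integrand k E K g x1 \<in> borel_measurable (PiM {2..k} (\<lambda>_. lborel))"
proof -
  have "(\<lambda>y. \<Prod>(i, j)\<in>ordered_edges E. ennreal (K ((y(1 := x1)) i) ((y(1 := x1)) j)))
      \<in> borel_measurable (PiM {2..k} (\<lambda>_. lborel))"
  proof (intro borel_measurable_prod_ennreal, clarify)
    fix i j assume "(i, j) \<in> ordered_edges E"
    then have "i \<in> {1..k}" "j \<in> {1..k}"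
      using E unfolding ordered_edges_def simple_graph_on_def by auto
    then show "(\<lambda>y. ennreal (K ((y(1 := x1)) i) ((y(1 := x1)) j))) \<in> borel_measurable (PiM {2..k} (\<lambda>_. lborel))"
      by (intro borel_measurable_kernel_comp[OF K] measurable_fun_upd_component)
  qed
  moreover have "(\<lambda>y. \<Prod>i\<in>{2..k}. g i ((y(1 := x1)) i)) \<in> borel_measurable (PiM {2..k} (\<lambda>_. lborel))"
  proof (rule borel_measurable_prod_ennreal)
    fix i assume i: "i \<in> {2..k}"
    then have "(\<lambda>y. (y(1 := x1)) i) \<in> measurable (PiM {2..k} (\<lambda>_. lborel)) lborel"
      by (intro measurable_fun_upd_component) auto
    from measurable_compose[OF this g[OF i]]
    show "(\<lambda>y. g i ((y(1 := x1)) i)) \<in> borel_measurable (PiM {2..k} (\<lambda>_. lborel))" .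
  qed
  ultimately show ?thesis
    unfolding U_integrand_def[abs_def] by (rule borel_measurable_times_ennreal)
qed

lemma U_enn_cong:
  assumes "\<And>i. i \<in> {2..k} \<Longrightarrow> g i = h i"
  shows "U_enn k E K g x1 = U_enn k E K h x1"
proof -
  have "U_integrand k E K g x1 = U_integrand k E K h x1"
    unfolding U_integrand_def using assms by (intro ext arg_cong2[where f="(*)"] refl prod.cong) auto
  then show ?thesis
    by (simp add: U_enn_def)
qed

lemma U_integrand_fun_upd_leaf:
  assumes E: "simple_graph_on k E" and k2: "2 \<le> k" and m: "m < k" "{m, k} \<in> E"
    and leaf: "\<And>e. e \<in> E \<Longrightarrow> k \<in> e \<Longrightarrow> e = {m, k}"
  shows "U_integrand k E K g x1 (x(k := t))
    = U_integrand (k - 1) (E - {{m, k}}) K g x1 x * (ennreal (K ((x(1 := x1)) m) t) * g k t)"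
proof -
  define E' where "E' = E - {{m, k}}"
  define z where "z = x(1 := x1)"
  define z' where "z' = (x(k := t))(1 := x1)"
  have I: "{2..k} = insert k {2..k - 1}" "k \<notin> {2..k - 1}"
    using k2 by auto
  have edges: "ordered_edges E = insert (m, k) (ordered_edges E')" "(m, k) \<notin> ordered_edges E'"
    using m unfolding ordered_edges_def E'_def by (auto simp: doubleton_eq_iff)
  have finite: "finite (ordered_edges E')"
    using finite_ordered_edges[OF E] edges by simp
  have avoid_k: "i \<noteq> k \<and> j \<noteq> k" if "(i, j) \<in> ordered_edges E'" for i j
    using that leaf[of "{i, j}"] unfolding ordered_edges_def E'_def by auto
  have z': "z' i = z i" if "i \<noteq> k" for i
    using that unfolding z'_def z_def by auto
  have "z' k = t" "z' m = z m"
    using k2 m by (auto simp: z'_def z_def)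
  moreover have "(\<Prod>(i, j)\<in>ordered_edges E'. ennreal (K (z' i) (z' j)))
      = (\<Prod>(i, j)\<in>ordered_edges E'. ennreal (K (z i) (z j)))"
    by (rule prod.cong) (auto simp: z' dest: avoid_k)
  moreover have "(\<Prod>i\<in>{2..k - 1}. g i (z' i)) = (\<Prod>i\<in>{2..k - 1}. g i (z i))"
    by (intro prod.cong refl) (metis I(2) z')
  ultimately show ?thesis
    unfolding U_integrand_def z'_def[symmetric] z_def[symmetric] E'_def[symmetric] I(1) edges(1)
      prod.insert[OF finite edges(2)] prod.insert[OF finite_atLeastAtMost I(2)]
    by (simp add: ac_simps)
qed

lemma U_enn_integrate_leaf:
  fixes K :: "'a::euclidean_space \<Rightarrow> 'a \<Rightarrow> real"
  assumes E: "simple_graph_on k E" and k2: "2 \<le> k" and m: "m < k" "{m, k} \<in> E"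
    and leaf: "\<And>e. e \<in> E \<Longrightarrow> k \<in> e \<Longrightarrow> e = {m, k}"
    and K: "(\<lambda>(x, y). K x y) \<in> borel_measurable (lborel \<Otimes>\<^sub>M lborel)"
    and g: "\<And>i. i \<in> {2..k} \<Longrightarrow> g i \<in> borel_measurable lborel"
  shows "U_enn k E K g x1 = (\<integral>\<^sup>+ x. U_integrand (k - 1) (E - {{m, k}}) K g x1 x
            * kernel_op K (g k) ((x(1 := x1)) m) \<partial>(PiM {2..k - 1} (\<lambda>_. lborel)))"
proof -
  interpret product_sigma_finite "\<lambda>_::nat. lborel :: 'a measure"
    by standard
  have I: "{2..k} = insert k {2..k - 1}" "k \<notin> {2..k - 1}"
    using k2 by auto
  have [measurable]: "g k \<in> borel_measurable lborel"
    using k2 by (intro g) auto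
  have meas: "U_integrand k E K g x1 \<in> borel_measurable (PiM (insert k {2..k - 1}) (\<lambda>_. lborel))"
    using borel_measurable_U_integrand[OF E K g] I(1) by simp
  have "U_enn k E K g x1 = (\<integral>\<^sup>+ x. \<integral>\<^sup>+ t. U_integrand k E K g x1 (x(k := t)) \<partial>lborel
      \<partial>(PiM {2..k - 1} (\<lambda>_. lborel)))"
    unfolding U_enn_def I(1) by (rule product_nn_integral_insert[OF finite_atLeastAtMost I(2) meas])
  also have "\<dots> = (\<integral>\<^sup>+ x. U_integrand (k - 1) (E - {{m, k}}) K g x1 x
      * kernel_op K (g k) ((x(1 := x1)) m) \<partial>(PiM {2..k - 1} (\<lambda>_. lborel)))"
  proof (rule nn_integral_cong)
    fix x :: "nat \<Rightarrow> 'a"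
    have [measurable]: "(\<lambda>t. ennreal (K ((x(1 := x1)) m) t)) \<in> borel_measurable lborel"
      by (rule borel_measurable_kernel_comp[OF K]) auto
    have "(\<integral>\<^sup>+ t. U_integrand k E K g x1 (x(k := t)) \<partial>lborel) = (\<integral>\<^sup>+ t.
        U_integrand (k - 1) (E - {{m, k}}) K g x1 x * (ennreal (K ((x(1 := x1)) m) t) * g k t) \<partial>lborel)"
      by (intro nn_integral_cong U_integrand_fun_upd_leaf[OF E k2 m leaf])
    also have "\<dots> = U_integrand (k - 1) (E - {{m, k}}) K g x1 x * kernel_op K (g k) ((x(1 := x1)) m)"
      unfolding kernel_op_def by (rule nn_integral_cmult) measurable
    finally show "(\<integral>\<^sup>+ t. U_integrand k E K g x1 (x(k := t)) \<partial>lborel)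
        = U_integrand (k - 1) (E - {{m, k}}) K g x1 x * kernel_op K (g k) ((x(1 := x1)) m)" .
  qed
  finally show ?thesis .
qed

lemma U_integrand_absorb:
  assumes "m \<in> {2..k}"
  shows "U_integrand k E K g x1 x * h ((x(1 := x1)) m)
    = U_integrand k E K (g(m := (\<lambda>y. g m y * h y))) x1 x"
proof -
  define z where "z = x(1 := x1)"
  let ?g = "g(m := (\<lambda>y. g m y * h y))"
  have "(\<Prod>i\<in>{2..k}. ?g i (z i)) = ?g m (z m) * (\<Prod>i\<in>{2..k} - {m}. ?g i (z i))"
    by (rule prod.remove[OF _ assms]) simp
  also have "(\<Prod>i\<in>{2..k} - {m}. ?g i (z i)) = (\<Prod>i\<in>{2..k} - {m}. g i (z i))"
    by (rule prod.cong) auto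
  finally have "(\<Prod>i\<in>{2..k}. ?g i (z i)) = g m (z m) * h (z m) * (\<Prod>i\<in>{2..k} - {m}. g i (z i))"
    by simp
  moreover have "(\<Prod>i\<in>{2..k}. g i (z i)) = g m (z m) * (\<Prod>i\<in>{2..k} - {m}. g i (z i))"
    by (rule prod.remove[OF _ assms]) simp
  ultimately show ?thesis
    unfolding U_integrand_def z_def[symmetric] by (simp add: ac_simps)
qed

lemma U_weighted_remove_leaf:
  fixes K :: "'a::euclidean_space \<Rightarrow> 'a \<Rightarrow> real"
  assumes G: "root_increasing_graph k E" and k2: "2 \<le> k" and m: "1 \<le> m" "m < k" "{m, k} \<in> E"
    and K: "(\<lambda>(x, y). K x y) \<in> borel_measurable (lborel \<Otimes>\<^sub>M lborel)"
    and g: "\<And>i. i \<in> {1..k} \<Longrightarrow> g i \<in> borel_measurable lborel"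
  shows "U_weighted k E K g x1
    = U_weighted (k - 1) (E - {{m, k}}) K (g(m := (\<lambda>x. g m x * kernel_op K (g k) x))) x1"
proof -
  define E' where "E' = E - {{m, k}}"
  define g' where "g' = g(m := (\<lambda>x. g m x * kernel_op K (g k) x))"
  have E: "simple_graph_on k E" and E': "simple_graph_on (k - 1) E'"
    using G root_increasing_graph_remove_max_vertex[OF G k2 m(3)]
    by (simp_all add: root_increasing_graph_def E'_def)
  have U_split: "U_enn k E K g x1 = (\<integral>\<^sup>+ x. U_integrand (k - 1) E' K g x1 x
      * kernel_op K (g k) ((x(1 := x1)) m) \<partial>(PiM {2..k - 1} (\<lambda>_. lborel)))"
    unfolding E'_def using edge_at_max_vertex[OF G k2 m(3)] g
    by (intro U_enn_integrate_leaf[OF E k2 m(2,3) _ K]) auto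
  show ?thesis
  proof (cases "m = 1")
    case True
    have "U_enn k E K g x1 = (\<integral>\<^sup>+ x. U_integrand (k - 1) E' K g x1 x * kernel_op K (g k) x1
        \<partial>(PiM {2..k - 1} (\<lambda>_. lborel)))"
      unfolding U_split using True by simp
    also have "\<dots> = U_enn (k - 1) E' K g x1 * kernel_op K (g k) x1"
      unfolding U_enn_def using g by (intro nn_integral_multc borel_measurable_U_integrand[OF E' K]) auto
    also have "U_enn (k - 1) E' K g x1 = U_enn (k - 1) E' K g' x1"
      using True by (intro U_enn_cong) (auto simp: g'_def)
    finally show ?thesis
      using True unfolding U_weighted_def E'_def[symmetric] g'_def[symmetric] by (simp add: g'_def ac_simps)
  next
    case False
    then have m2: "m \<in> {2..k - 1}"
      using m by auto
    have "U_integrand (k - 1) E' K g x1 x * kernel_op K (g k) ((x(1 := x1)) m)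
        = U_integrand (k - 1) E' K g' x1 x" for x
      unfolding g'_def using m2 by (rule U_integrand_absorb)
    then have "U_enn k E K g x1 = U_enn (k - 1) E' K g' x1"
      unfolding U_split by (simp add: U_enn_def)
    then show ?thesis
      using False unfolding U_weighted_def E'_def[symmetric] g'_def[symmetric] by (simp add: g'_def)
  qed
qed

lemma U_weighted_single_vertex:
  assumes "simple_graph_on 1 E"
  shows "U_weighted 1 E K g = g 1"
proof -
  have "E = {}"
  proof (rule ccontr)
    assume "E \<noteq> {}"
    then obtain e where "e \<in> E"
      by blast
    then have "e \<subseteq> {1..1}" "card e = 2"
      using assms unfolding simple_graph_on_def by auto
    moreover from this have "card e \<le> card {1..1::nat}"
      by (intro card_mono) auto
    ultimately show False
      by simp
  qed
  then have "ordered_edges E = {}"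
    by (simp add: ordered_edges_def)
  then have integrand: "U_integrand 1 E K g x1 = (\<lambda>_. 1)" for x1
    by (simp add: U_integrand_def fun_eq_iff)
  have "U_enn 1 E K g x1 = 1" for x1
    unfolding U_enn_def integrand by (simp add: PiM_empty)
  then show ?thesis
    by (simp add: U_weighted_def fun_eq_iff)
qed

section \<open>Induction on the number of vertices\<close>

lemma leaf_exponents_sum_gt:
  fixes p :: "nat \<Rightarrow> real"
  assumes m: "m \<in> {1..k}" and "0 < p m" "0 < t" "t < 2 * p m"
  shows "(\<Sum>i=1..k. 1 / p i) < (\<Sum>i=1..Suc k. 1 / (p(m := 2 * p m, Suc k := t)) i)"
proof -
  let ?p = "p(m := 2 * p m, Suc k := t)"
  define S where "S = (\<Sum>i\<in>{1..k} - {m}. 1 / p i)"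
  have "(\<Sum>i=1..k. 1 / p i) = 1 / p m + S"
    unfolding S_def using m by (intro sum.remove) auto
  moreover have "(\<Sum>i=1..Suc k. 1 / ?p i) = 1 / t + (1 / (2 * p m) + S)"
  proof -
    have "(\<Sum>i=1..Suc k. 1 / ?p i) = (\<Sum>i=1..k. 1 / ?p i) + 1 / t"
      by (simp add: sum.cl_ivl_Suc)
    also have "(\<Sum>i=1..k. 1 / ?p i) = 1 / ?p m + (\<Sum>i\<in>{1..k} - {m}. 1 / ?p i)"
      using m by (intro sum.remove) auto
    also have "(\<Sum>i\<in>{1..k} - {m}. 1 / ?p i) = S"
      unfolding S_def by (rule sum.cong) auto
    also have "?p m = 2 * p m"
      using m by simp
    finally show ?thesis
      by simp
  qed
  moreover have "1 / (2 * p m) < 1 / t"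
    using assms by (intro divide_strict_left_mono) auto
  moreover have "1 / p m = 1 / (2 * p m) + 1 / (2 * p m)"
    by simp
  ultimately show ?thesis
    by linarith
qed

lemma leaf_exponents_gt_one:
  fixes p :: "nat \<Rightarrow> real"
  assumes "m \<in> {1..k}" "1 \<le> p m" "1 < t" "\<forall>i\<in>{1..k} - {m}. 1 < p i"
  shows "\<forall>i\<in>{1..Suc k}. 1 < (p(m := 2 * p m, Suc k := t)) i"
proof
  fix i assume "i \<in> {1..Suc k}"
  then consider "i = Suc k" | "i = m" | "i \<in> {1..k} - {m}"
    by force
  then show "1 < (p(m := 2 * p m, Suc k := t)) i"
    using assms by cases auto
qed

lemma Lp_norm_mult_kernel_op_le:
  fixes K :: "'a::euclidean_space \<Rightarrow> 'a \<Rightarrow> real"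
  assumes K: "(\<lambda>(x, y). K x y) \<in> borel_measurable (lborel \<Otimes>\<^sub>M lborel)"
    and [measurable]: "g \<in> borel_measurable lborel" and h: "h \<in> borel_measurable lborel"
    and "0 < r" and T: "Lp_norm (2 * r) (kernel_op K h) \<le> ennreal C * Lp_norm t h"
  shows "Lp_norm r (\<lambda>x. g x * kernel_op K h x) \<le> Lp_norm (2 * r) g * (ennreal C * Lp_norm t h)"
proof -
  have [measurable]: "kernel_op K h \<in> borel_measurable lborel"
    using K h by (rule borel_measurable_kernel_op)
  have "Lp_norm r (\<lambda>x. g x * kernel_op K h x) \<le> Lp_norm (2 * r) g * Lp_norm (2 * r) (kernel_op K h)"
    using \<open>0 < r\<close> by (rule Lp_norm_mult_le[rotated 2]) measurable
  also have "\<dots> \<le> Lp_norm (2 * r) g * (ennreal C * Lp_norm t h)"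
    using T by (rule mult_left_mono) simp
  finally show ?thesis .
qed

lemma U_weighted_Lp_bound_add_leaf:
  fixes K :: "'a::euclidean_space \<Rightarrow> 'a \<Rightarrow> real" and g :: "nat \<Rightarrow> 'a \<Rightarrow> ennreal"
  assumes G: "root_increasing_graph k E" and k2: "2 \<le> k" and m: "1 \<le> m" "m < k" "{m, k} \<in> E"
    and K: "(\<lambda>(x, y). K x y) \<in> borel_measurable (lborel \<Otimes>\<^sub>M lborel)"
    and bound: "\<And>h. \<forall>i\<in>{1..k - 1}. h i \<in> borel_measurable lborel \<Longrightarrow>
      Lp_norm q (U_weighted (k - 1) (E - {{m, k}}) K h) \<le> ennreal C * (\<Prod>i=1..k - 1. Lp_norm (p i) (h i))"
    and p_pos: "0 < p m"
    and T: "\<And>h. h \<in> borel_measurable lborel \<Longrightarrow>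
      Lp_norm (2 * p m) (kernel_op K h) \<le> ennreal CT * Lp_norm t h"
    and C: "0 \<le> C" "0 \<le> CT"
    and g: "\<forall>i\<in>{1..k}. g i \<in> borel_measurable lborel"
  shows "Lp_norm q (U_weighted k E K g)
    \<le> ennreal (C * CT) * (\<Prod>i=1..k. Lp_norm ((p(m := 2 * p m, k := t)) i) (g i))"
proof -
  define g' where "g' = g(m := (\<lambda>x. g m x * kernel_op K (g k) x))"
  define Q where "Q = (\<Prod>i\<in>{1..k - 1} - {m}. Lp_norm (p i) (g i))"
  have m_mem: "m \<in> {1..k - 1}" and k_split: "{1..k} = insert k {1..k - 1}"
    using m k2 by auto
  have gm: "g m \<in> borel_measurable lborel" and gk: "g k \<in> borel_measurable lborel"
    using g m k2 by auto
  have Tgk: "kernel_op K (g k) \<in> borel_measurable lborel"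
    using K gk by (rule borel_measurable_kernel_op)
  from gm gk have g'm: "Lp_norm (p m) (g' m) \<le> Lp_norm (2 * p m) (g m) * (ennreal CT * Lp_norm t (g k))"
    unfolding g'_def using Lp_norm_mult_kernel_op_le[OF K _ _ p_pos T] by simp
  have "(\<Prod>i=1..k - 1. Lp_norm (p i) (g' i)) = Lp_norm (p m) (g' m) * (\<Prod>i\<in>{1..k - 1} - {m}. Lp_norm (p i) (g' i))"
    by (rule prod.remove[OF _ m_mem]) simp
  also have "(\<Prod>i\<in>{1..k - 1} - {m}. Lp_norm (p i) (g' i)) = Q"
    unfolding Q_def by (rule prod.cong) (auto simp: g'_def)
  finally have prod_g': "(\<Prod>i=1..k - 1. Lp_norm (p i) (g' i)) = Lp_norm (p m) (g' m) * Q" .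
  let ?p = "p(m := 2 * p m, k := t)"
  have "(\<Prod>i=1..k. Lp_norm (?p i) (g i)) = Lp_norm (?p k) (g k) * (\<Prod>i=1..k - 1. Lp_norm (?p i) (g i))"
    unfolding k_split by (rule prod.insert) auto
  also have "(\<Prod>i=1..k - 1. Lp_norm (?p i) (g i))
      = Lp_norm (?p m) (g m) * (\<Prod>i\<in>{1..k - 1} - {m}. Lp_norm (?p i) (g i))"
    by (rule prod.remove[OF _ m_mem]) simp
  also have "(\<Prod>i\<in>{1..k - 1} - {m}. Lp_norm (?p i) (g i)) = Q"
    unfolding Q_def by (rule prod.cong) auto
  finally have "(\<Prod>i=1..k. Lp_norm (?p i) (g i)) = Lp_norm (?p k) (g k) * (Lp_norm (?p m) (g m) * Q)" .
  moreover have "?p k = t" "?p m = 2 * p m"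
    using m(2) by simp_all
  ultimately have prod_g: "(\<Prod>i=1..k. Lp_norm (?p i) (g i)) = Lp_norm t (g k) * (Lp_norm (2 * p m) (g m) * Q)"
    by (simp only:)
  have "U_weighted k E K g = U_weighted (k - 1) (E - {{m, k}}) K g'"
    unfolding g'_def using g by (intro ext U_weighted_remove_leaf[OF G k2 m K]) auto
  moreover have "\<forall>i\<in>{1..k - 1}. g' i \<in> borel_measurable lborel"
    using g gm Tgk unfolding g'_def by (auto intro: borel_measurable_times_ennreal)
  ultimately have "Lp_norm q (U_weighted k E K g) \<le> ennreal C * (\<Prod>i=1..k - 1. Lp_norm (p i) (g' i))"
    using bound by simp
  also have "\<dots> \<le> ennreal C * (Lp_norm (2 * p m) (g m) * (ennreal CT * Lp_norm t (g k)) * Q)"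
    unfolding prod_g' by (intro mult_left_mono mult_right_mono g'm) auto
  also have "\<dots> = ennreal (C * CT) * (\<Prod>i=1..k. Lp_norm (?p i) (g i))"
    unfolding prod_g ennreal_mult[OF C] by (simp add: ac_simps)
  finally show ?thesis .
qed

text \<open>For a single vertex the exponent is \<open>q\<close> itself, which may equal \<open>1\<close>; strict
  inequalities only hold from two vertices on.\<close>
lemma U_weighted_Lp_bound:
  fixes K :: "'a::euclidean_space \<Rightarrow> 'a \<Rightarrow> real"
  assumes K_nonneg: "\<forall>x y. 0 \<le> K x y"
    and K: "(\<lambda>(x, y). K x y) \<in> borel_measurable (lborel \<Otimes>\<^sub>M lborel)"
    and K_impr: "univ_Lp_improving K" and q: "1 \<le> q"
    and "root_increasing_graph k E" "1 \<le> k"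
  shows "\<exists>p C. 0 \<le> C \<and> (\<forall>i\<in>{1..k}. 1 \<le> p i) \<and> 1 / q \<le> (\<Sum>i=1..k. 1 / p i) \<and>
     (2 \<le> k \<longrightarrow> (\<forall>i\<in>{1..k}. 1 < p i) \<and> 1 / q < (\<Sum>i=1..k. 1 / p i)) \<and>
     (\<forall>g::nat \<Rightarrow> 'a \<Rightarrow> ennreal. (\<forall>i\<in>{1..k}. g i \<in> borel_measurable lborel) \<longrightarrow>
        Lp_norm q (U_weighted k E K g) \<le> ennreal C * (\<Prod>i=1..k. Lp_norm (p i) (g i)))"
  using assms(5,6)
proof (induction k arbitrary: E)
  case (Suc k)
  show ?case
  proof (cases "k = 0")
    case True
    then have "U_weighted (Suc k) E K g = g 1" for g :: "nat \<Rightarrow> 'a \<Rightarrow> ennreal"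
      using Suc.prems(1) U_weighted_single_vertex[of E K g] by (simp add: root_increasing_graph_def)
    then show ?thesis
      using True q by (intro exI[of _ "\<lambda>_. q"] exI[of _ 1]) auto
  next
    case False
    note G = Suc.prems(1)
    have k2: "2 \<le> Suc k"
      using False by simp
    obtain m where m: "1 \<le> m" "m < Suc k" "{m, Suc k} \<in> E"
      using max_vertex_has_smaller_neighbour[OF G k2] by blast
    then have G': "root_increasing_graph k (E - {{m, Suc k}})"
      using root_increasing_graph_remove_max_vertex[OF G k2] by simp
    have "1 \<le> k"
      using False by simp
    then obtain p C where C: "0 \<le> C" and p_ge: "\<forall>i\<in>{1..k}. 1 \<le> p i"
      and p_sum: "1 / q \<le> (\<Sum>i=1..k. 1 / p i)" and p_gt: "2 \<le> k \<longrightarrow> (\<forall>i\<in>{1..k}. 1 < p i)"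
      and bound: "\<forall>h. (\<forall>i\<in>{1..k}. h i \<in> borel_measurable lborel) \<longrightarrow>
        Lp_norm q (U_weighted k (E - {{m, Suc k}}) K h) \<le> ennreal C * (\<Prod>i=1..k. Lp_norm (p i) (h i))"
      using Suc.IH[OF G' \<open>1 \<le> k\<close>] by blast
    have m_mem: "m \<in> {1..k}"
      using m by auto
    then have "1 \<le> p m"
      using p_ge by blast
    then have "1 < 2 * p m"
      by simp
    then obtain t CT where t: "1 < t" "t < 2 * p m" and CT: "0 < CT" and T: "\<And>h. h \<in> borel_measurable lborel \<Longrightarrow>
        Lp_norm (2 * p m) (kernel_op K h) \<le> ennreal CT * Lp_norm t h"
      using univ_Lp_improving_kernel_op[OF K_impr _ K_nonneg] by blast
    define p' where "p' = p(m := 2 * p m, Suc k := t)"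
    have "\<forall>i\<in>{1..k} - {m}. 1 < p i"
      using p_gt m_mem by (cases "k = 1") auto
    then have p'_gt: "\<forall>i\<in>{1..Suc k}. 1 < p' i"
      unfolding p'_def using m_mem \<open>1 \<le> p m\<close> t by (intro leaf_exponents_gt_one) auto
    have "(\<Sum>i=1..k. 1 / p i) < (\<Sum>i=1..Suc k. 1 / p' i)"
      unfolding p'_def using m_mem t \<open>1 < 2 * p m\<close> by (intro leaf_exponents_sum_gt) auto
    moreover have "Lp_norm q (U_weighted (Suc k) E K g) \<le> ennreal (C * CT) * (\<Prod>i=1..Suc k. Lp_norm (p' i) (g i))"
      if "\<forall>i\<in>{1..Suc k}. g i \<in> borel_measurable lborel" for g
      unfolding p'_def using bound that C CT \<open>1 < 2 * p m\<close>
      by (intro U_weighted_Lp_bound_add_leaf[where p=p and m=m, OF G k2 m K _ _ T]) auto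
    ultimately show ?thesis
      using p'_gt p_sum C CT by (intro exI[of _ p'] exI[of _ "C * CT"]) (auto intro: less_imp_le)
  qed
qed simp

lemma U_fun_eq_U_weighted:
  "U_fun n E K f x * ennreal (f 1 x) = U_weighted n E K (\<lambda>i x. ennreal (f i x)) x"
  by (simp add: U_fun_def U_weighted_def U_enn_def U_integrand_def ordered_edges_def Let_def)

lemma U_fun_Lp_bound:
  fixes K :: "'a::euclidean_space \<Rightarrow> 'a \<Rightarrow> real"
  assumes K_nonneg: "\<forall>x y. 0 \<le> K x y"
    and K: "(\<lambda>(x, y). K x y) \<in> borel_measurable (lborel \<Otimes>\<^sub>M lborel)"
    and K_impr: "univ_Lp_improving K" and q: "1 \<le> q"
    and G: "root_increasing_graph n E" and n2: "2 \<le> n"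
  shows "\<exists>p C. (\<forall>i\<in>{1..n}. 1 < p i) \<and> 1 / q < (\<Sum>i=1..n. 1 / p i) \<and>
    (\<forall>f :: nat \<Rightarrow> 'a \<Rightarrow> real. (\<forall>i\<in>{1..n}. f i \<in> borel_measurable lborel \<and> (\<forall>x. 0 \<le> f i x)) \<longrightarrow>
      Lp_norm q (\<lambda>x. U_fun n E K f x * ennreal (f 1 x))
        \<le> ennreal C * (\<Prod>i=1..n. Lp_norm (p i) (\<lambda>x. ennreal (f i x))))"
proof -
  obtain p C where p: "\<forall>i\<in>{1..n}. 1 < p i" "1 / q < (\<Sum>i=1..n. 1 / p i)"
    and bound: "\<forall>g. (\<forall>i\<in>{1..n}. g i \<in> borel_measurable lborel) \<longrightarrow>
      Lp_norm q (U_weighted n E K g) \<le> ennreal C * (\<Prod>i=1..n. Lp_norm (p i) (g i))"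
    using U_weighted_Lp_bound[OF K_nonneg K K_impr q G] n2 by auto
  have "Lp_norm q (\<lambda>x. U_fun n E K f x * ennreal (f 1 x))
      \<le> ennreal C * (\<Prod>i=1..n. Lp_norm (p i) (\<lambda>x. ennreal (f i x)))"
    if f: "\<forall>i\<in>{1..n}. f i \<in> borel_measurable lborel \<and> (\<forall>x. 0 \<le> f i x)" for f :: "nat \<Rightarrow> 'a \<Rightarrow> real"
  proof -
    have "\<forall>i\<in>{1..n}. (\<lambda>x. ennreal (f i x)) \<in> borel_measurable lborel"
      using f by (auto intro: measurable_compose[OF _ measurable_ennreal])
    then show ?thesis
      using bound[THEN spec, of "\<lambda>i x. ennreal (f i x)"] unfolding U_fun_eq_U_weighted by simp
  qed
  then show ?thesis
    using p by blast
qed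

theorem mainTheorem2:
  fixes K :: "'a::euclidean_space \<Rightarrow> 'a \<Rightarrow> real"
    and n :: nat and E :: "nat set set"
  assumes K_nonneg: "\<forall>x y. 0 \<le> K x y"
    and K_loc: "locally_integrable_kernel K"
    and K_impr: "univ_Lp_improving K"
    and n2: "n \<ge> 2"
    and tree: "is_tree n E"
    and labels: "\<forall>v w. rooted_child E v w \<longrightarrow> v < w"
  shows "\<forall>q::real. q \<ge> 1 \<longrightarrow>
    (\<exists>(p :: nat \<Rightarrow> real) (C :: real).
       (\<forall>i\<in>{1..n}. 1 < p i) \<and> (\<Sum>i=1..n. 1 / p i) > 1 / q \<and>
       (\<forall>f :: nat \<Rightarrow> 'a \<Rightarrow> real.
          (\<forall>i\<in>{1..n}. f i \<in> borel_measurable lborel \<and> (\<forall>x. 0 \<le> f i x)) \<longrightarrow>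
          Lp_norm q (\<lambda>x. U_fun n E K f x * ennreal (f 1 x))
            \<le> ennreal C * (\<Prod>i=1..n. Lp_norm (p i) (\<lambda>x. ennreal (f i x)))))"
proof -
  have "root_increasing_graph n E"
    using tree labels by (simp add: is_tree_def root_increasing_graph_def)
  then show ?thesis
    using U_fun_Lp_bound[OF K_nonneg locally_integrable_kernel_measurable[OF K_loc] K_impr _ _ n2] by blast
qed

end
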